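(* For any finite interval $\Lambda\subset\mathbb Z$ and any $N\in\{0,1,\dots,N^{\max}_\Lambda\}$ there is a root tiling $R\in\mathcal R_\Lambda$ with $N_\Lambda(R)=N$. Moreover $$\frac13\le\frac{N^{\max}_\Lambda}{|\Lambda|}\le\frac13+\frac{4}{3|\Lambda|},$$ so that $\lim_{|\Lambda|\to\infty}N^{\max}_\Lambda/|\Lambda|=1/3$.
   Context: Tiles on a finite interval $\Lambda$ occupy consecutive sites and carry 0/1 words (particle contents): void $0$; monomer $100$; left boundary dimer $11000$ (allowed only as the first tile of $\Lambda$); and, allowed only as the last tile: right dimer $011$, right 1-monomer $1$, right 2-monomer $10$. A root tiling $R$ of $\Lambda$ is a tiling of $\Lambda$ by consecutive tiles consisting of voids and monomers, optionally with a left boundary dimer as first tile and optionally with one of right dimer, right 1-monomer, right 2-monomer as last tile; $\mathcal R_\Lambda$ is the set of root tilings. $N_\Lambda(R)$ is the total number of $1$'s in the concatenated particle content of $R$, and $N^{\max}_\Lambda=\max\{N_\Lambda(R):R\in\mathcal R_\Lambda\}$. *)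

theory Defs
  imports Complex_Main
begin

datatype tile = Void | Monomer | LeftDimer | RightDimer | RightMono1 | RightMono2

fun content :: "tile \<Rightarrow> nat list" where
  "content Void = [0]"
| "content Monomer = [1,0,0]"
| "content LeftDimer = [1,1,0,0,0]"
| "content RightDimer = [0,1,1]"
| "content RightMono1 = [1]"
| "content RightMono2 = [1,0]"

fun right_tile :: "tile \<Rightarrow> bool" where
  "right_tile RightDimer = True"
| "right_tile RightMono1 = True"
| "right_tile RightMono2 = True"
| "right_tile _ = False"

definition root_tilings :: "int set \<Rightarrow> tile list set" where
  "root_tilings \<Lambda> = {ts.
      (\<forall>i<length ts. ts ! i = LeftDimer \<longrightarrow> i = 0) \<and>
      (\<forall>i<length ts. right_tile (ts ! i) \<longrightarrow> i = length ts - 1) \<and>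
      length (concat (map content ts)) = card \<Lambda>}"

definition particle_number :: "tile list \<Rightarrow> nat" where
  "particle_number ts = sum_list (concat (map content ts))"

definition N_max :: "int set \<Rightarrow> nat" where
  "N_max \<Lambda> = Max (particle_number ` root_tilings \<Lambda>)"

end

theory Submission
  imports Defs
begin

text \<open>A root tiling is a left boundary piece (nothing or \<open>11000\<close>), a bulk of voids and
  monomers, and a right boundary piece (nothing, \<open>011\<close>, \<open>1\<close> or \<open>10\<close>). The bulk carries any
  number of particles up to a third of its sites, and the boundary pieces together exceed a
  third of their sites by at most \<open>4/3\<close> (attained by \<open>11000\<close> and \<open>011\<close>); this gives
  \<open>|\<Lambda>| \<le> 3 N\<^sup>m\<^sup>a\<^sup>x \<le> |\<Lambda>| + 4\<close>. Particle numbers below a realised one are realised as well: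
  remove a bulk monomer, or replace a boundary piece by one with one particle less on no more
  sites (\<open>011 \<mapsto> 1\<close>, \<open>1, 10 \<mapsto> nothing\<close>, and \<open>11000\<close> alone by a right \<open>1\<close>).\<close>

lemma positions_at_head_iff: "(\<forall>i<length xs. P (xs ! i) \<longrightarrow> i = 0) \<longleftrightarrow> (\<forall>x\<in>set (tl xs). \<not> P x)"
  by (cases xs) (auto simp: all_set_conv_all_nth nth_Cons split: nat.split)

lemma positions_at_last_iff:
  "(\<forall>i<length xs. P (xs ! i) \<longrightarrow> i = length xs - 1) \<longleftrightarrow> (\<forall>x\<in>set (butlast xs). \<not> P x)"
  by (cases xs rule: rev_cases) (auto simp: all_set_conv_all_nth nth_append less_Suc_eq)

definition tiling_length :: "tile list \<Rightarrow> nat" where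
  "tiling_length ts = length (concat (map content ts))"

lemma tiling_length_Nil [simp]: "tiling_length [] = 0"
  and tiling_length_Cons [simp]: "tiling_length (t # ts) = length (content t) + tiling_length ts"
  and tiling_length_append [simp]: "tiling_length (ts @ us) = tiling_length ts + tiling_length us"
  by (simp_all add: tiling_length_def)

lemma particle_number_Nil [simp]: "particle_number [] = 0"
  and particle_number_Cons [simp]: "particle_number (t # ts) = sum_list (content t) + particle_number ts"
  and particle_number_append [simp]:
    "particle_number (ts @ us) = particle_number ts + particle_number us"
  by (simp_all add: particle_number_def)

lemma tiling_length_replicate [simp]: "tiling_length (replicate k t) = k * length (content t)"
  and particle_number_replicate [simp]: "particle_number (replicate k t) = k * sum_list (content t)"
  by (induction k) auto

abbreviation left_boundary_pieces :: "tile list set" where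
  "left_boundary_pieces \<equiv> {[], [LeftDimer]}"

abbreviation right_boundary_pieces :: "tile list set" where
  "right_boundary_pieces \<equiv> {[], [RightDimer], [RightMono1], [RightMono2]}"

definition admissible :: "tile list \<Rightarrow> bool" where
  "admissible ts \<longleftrightarrow> LeftDimer \<notin> set (tl ts) \<and> (\<forall>t\<in>set (butlast ts). \<not> right_tile t)"

lemma root_tilings_eq: "root_tilings \<Lambda> = {ts. admissible ts \<and> tiling_length ts = card \<Lambda>}"
  using positions_at_head_iff[where P = "\<lambda>t. t = LeftDimer"] positions_at_last_iff[where P = right_tile]
  by (auto simp: root_tilings_def admissible_def tiling_length_def)

lemma bulk_tile_cases: "t \<noteq> LeftDimer \<Longrightarrow> \<not> right_tile t \<Longrightarrow> t \<in> {Void, Monomer}"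
  by (cases t) auto

lemma admissible_iff_decomposition:
  "admissible ts \<longleftrightarrow> (\<exists>p m s. ts = p @ m @ s \<and> p \<in> left_boundary_pieces \<and>
      set m \<subseteq> {Void, Monomer} \<and> s \<in> right_boundary_pieces)"
  (is "_ \<longleftrightarrow> ?decomposed")
proof
  assume adm: "admissible ts"
  obtain p r where ts: "ts = p @ r" and p: "p \<in> left_boundary_pieces" and r: "LeftDimer \<notin> set r"
  proof (cases "ts = [] \<or> hd ts \<noteq> LeftDimer")
    case True
    with adm show ?thesis using that[of "[]" ts] by (cases ts) (auto simp: admissible_def)
  next
    case False
    with adm show ?thesis using that[of "[LeftDimer]" "tl ts"] by (cases ts) (auto simp: admissible_def)
  qed
  have r_last: "\<forall>t\<in>set (butlast r). \<not> right_tile t"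
    using adm unfolding admissible_def ts by (auto simp: butlast_append split: if_splits)
  obtain m s where "r = m @ s" "set m \<subseteq> {Void, Monomer}" "s \<in> right_boundary_pieces"
  proof (cases r rule: rev_cases)
    case Nil
    then show ?thesis using that[of "[]" "[]"] by simp
  next
    case (snoc m t)
    have "set m \<subseteq> {Void, Monomer}"
    proof
      fix x assume "x \<in> set m"
      with r r_last snoc show "x \<in> {Void, Monomer}" by (intro bulk_tile_cases) auto
    qed
    then show ?thesis
      using that[of m "[t]"] that[of r "[]"] r snoc bulk_tile_cases[of t] by (cases t) auto
  qed
  with ts p show ?decomposed by blast
next
  assume ?decomposed
  then obtain p m s where ts: "ts = p @ m @ s" and p: "p \<in> left_boundary_pieces"
    and m: "set m \<subseteq> {Void, Monomer}" and s: "s \<in> right_boundary_pieces"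
    by blast
  from m have "LeftDimer \<notin> set m" "\<forall>t\<in>set m. \<not> right_tile t" by auto
  with ts p s show "admissible ts"
    by (auto simp: admissible_def butlast_append tl_append_if split: if_splits
        dest: in_set_butlastD list.set_sel(2))
qed

lemma bulk_particle_bound: "set m \<subseteq> {Void, Monomer} \<Longrightarrow> 3 * particle_number m \<le> tiling_length m"
  by (induction m) auto

definition realizable :: "nat \<Rightarrow> nat \<Rightarrow> bool" where
  "realizable n N \<longleftrightarrow> (\<exists>ts. admissible ts \<and> tiling_length ts = n \<and> particle_number ts = N)"

text \<open>The (sites, particles) profiles of the boundary pieces; between them, \<open>k\<close> monomers
  occupy \<open>3 * k\<close> sites and voids fill the rest.\<close>

abbreviation left_profiles :: "(nat \<times> nat) set" where
  "left_profiles \<equiv> {(0, 0), (5, 2)}"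

abbreviation right_profiles :: "(nat \<times> nat) set" where
  "right_profiles \<equiv> {(0, 0), (3, 2), (1, 1), (2, 1)}"

lemma realizable_iff:
  "realizable n N \<longleftrightarrow> (\<exists>lp cp ls cs k. (lp, cp) \<in> left_profiles \<and>
      (ls, cs) \<in> right_profiles \<and> lp + 3 * k + ls \<le> n \<and> N = cp + k + cs)"
  (is "_ \<longleftrightarrow> ?profiles")
proof
  assume "realizable n N"
  then obtain p m s where ts: "tiling_length (p @ m @ s) = n" "particle_number (p @ m @ s) = N"
    and p: "p \<in> left_boundary_pieces" and m: "set m \<subseteq> {Void, Monomer}"
    and s: "s \<in> right_boundary_pieces"
    unfolding realizable_def admissible_iff_decomposition by blast
  from p have "(tiling_length p, particle_number p) \<in> left_profiles" by auto
  moreover from s have "(tiling_length s, particle_number s) \<in> right_profiles" by auto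
  moreover have "tiling_length p + 3 * particle_number m + tiling_length s \<le> n"
    using ts bulk_particle_bound[OF m] by simp
  ultimately show ?profiles using ts
    by (intro exI[of _ "tiling_length p"] exI[of _ "particle_number p"] exI[of _ "tiling_length s"]
        exI[of _ "particle_number s"] exI[of _ "particle_number m"]) simp
next
  assume ?profiles
  then obtain lp cp ls cs k where lp: "(lp, cp) \<in> left_profiles"
    and ls: "(ls, cs) \<in> right_profiles" and n: "lp + 3 * k + ls \<le> n"
    and N: "N = cp + k + cs" by blast
  have "\<exists>p\<in>left_boundary_pieces. tiling_length p = lp \<and> particle_number p = cp"
    using lp by auto
  then obtain p where p: "p \<in> left_boundary_pieces" "tiling_length p = lp" "particle_number p = cp"
    by blast
  have "\<exists>s\<in>right_boundary_pieces. tiling_length s = ls \<and> particle_number s = cs"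
    using ls by auto
  then obtain s where s: "s \<in> right_boundary_pieces" "tiling_length s = ls" "particle_number s = cs"
    by blast
  define m where "m = replicate k Monomer @ replicate (n - (lp + 3 * k + ls)) Void"
  have "admissible (p @ m @ s)"
    unfolding admissible_iff_decomposition using p s
    by (intro exI[of _ p] exI[of _ m] exI[of _ s]) (auto simp: m_def)
  moreover have "tiling_length (p @ m @ s) = n" "particle_number (p @ m @ s) = N"
    using n N p s by (simp_all add: m_def)
  ultimately show "realizable n N" unfolding realizable_def by blast
qed

lemma realizable_SucD: "realizable n (Suc N) \<Longrightarrow> realizable n N"
proof -
  assume "realizable n (Suc N)"
  then obtain lp cp ls cs k where
    lp: "(lp, cp) \<in> left_profiles" and ls: "(ls, cs) \<in> right_profiles"
    and n: "lp + 3 * k + ls \<le> n" and N: "Suc N = cp + k + cs"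
    unfolding realizable_iff by blast
  consider (bulk) "k > 0" | (right) "k = 0" "cs > 0" | (left) "k = 0" "cs = 0" "cp > 0"
    using N by linarith
  then show "realizable n N"
  proof cases
    case bulk
    with n N have "lp + 3 * (k - 1) + ls \<le> n" "N = cp + (k - 1) + cs" by auto
    with lp ls show ?thesis unfolding realizable_iff by blast
  next
    case right
    with ls have "\<exists>ls'\<le>ls. (ls', cs - 1) \<in> right_profiles"
      by (auto intro: exI[of _ 0] exI[of _ 1])
    then obtain ls' where "ls' \<le> ls" "(ls', cs - 1) \<in> right_profiles" by blast
    moreover from this n N right have "lp + 3 * k + ls' \<le> n" "N = cp + k + (cs - 1)" by auto
    ultimately show ?thesis using lp unfolding realizable_iff by blast
  next
    case left
    with lp n N have "1 \<le> n" "N = 1" by auto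
    then show ?thesis unfolding realizable_iff
      by (intro exI[of _ 0] exI[of _ 0] exI[of _ 1] exI[of _ 1] exI[of _ 0]) simp
  qed
qed

lemma realizable_downward_closed: "realizable n N \<Longrightarrow> M \<le> N \<Longrightarrow> realizable n M"
proof (induction N)
  case (Suc N)
  then show ?case using realizable_SucD[of n N] by (cases "M = Suc N") auto
qed simp

lemma realizable_upper_bound: "realizable n N \<Longrightarrow> 3 * N \<le> n + 4"
  unfolding realizable_iff by auto

lemma ex_realizable_ge_third: "\<exists>N. realizable n N \<and> n \<le> 3 * N"
proof -
  define r where "r = n mod 3"
  have "r < 3" unfolding r_def by simp
  then have "(r, min r 1) \<in> right_profiles" by (auto simp: less_Suc_eq numeral_3_eq_3)
  then have "realizable n (n div 3 + min r 1)" unfolding realizable_iff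
    by (intro exI[of _ 0] exI[of _ 0] exI[of _ r] exI[of _ "min r 1"] exI[of _ "n div 3"])
      (simp add: r_def)
  moreover have "n \<le> 3 * (n div 3 + min r 1)"
    using div_mult_mod_eq[of n 3] unfolding r_def min_def by presburger
  ultimately show ?thesis by blast
qed

lemma N_max_eq: "N_max \<Lambda> = Max (Collect (realizable (card \<Lambda>)))"
proof -
  have "particle_number ` root_tilings \<Lambda> = Collect (realizable (card \<Lambda>))"
    unfolding root_tilings_eq realizable_def by auto
  then show ?thesis unfolding N_max_def by simp
qed

lemma finite_realizable: "finite (Collect (realizable n))"
  by (rule finite_subset[of _ "{..n + 4}"]) (auto dest: realizable_upper_bound)

lemma realizable_N_max: "realizable (card \<Lambda>) (N_max \<Lambda>)"
proof -
  have "Collect (realizable (card \<Lambda>)) \<noteq> {}" using ex_realizable_ge_third by blast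
  then show ?thesis unfolding N_max_eq using Max_in[OF finite_realizable] by blast
qed

lemma realizable_le_N_max: "realizable (card \<Lambda>) N \<Longrightarrow> N \<le> N_max \<Lambda>"
  unfolding N_max_eq by (simp add: finite_realizable)

lemma root_tilings_particle_numbers:
  "N \<le> N_max \<Lambda> \<Longrightarrow> \<exists>R\<in>root_tilings \<Lambda>. particle_number R = N"
proof -
  assume "N \<le> N_max \<Lambda>"
  then have "realizable (card \<Lambda>) N" by (rule realizable_downward_closed[OF realizable_N_max])
  then show ?thesis unfolding realizable_def root_tilings_eq by auto
qed

lemma N_max_lower_bound: "card \<Lambda> \<le> 3 * N_max \<Lambda>"
proof -
  obtain N where "realizable (card \<Lambda>) N" "card \<Lambda> \<le> 3 * N"
    using ex_realizable_ge_third by blast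
  then show ?thesis using realizable_le_N_max[of \<Lambda> N] by linarith
qed

lemma N_max_upper_bound: "3 * N_max \<Lambda> \<le> card \<Lambda> + 4"
  using realizable_upper_bound[OF realizable_N_max] .

lemma N_max_density_bounds:
  assumes "card \<Lambda> > 0"
  shows "1/3 \<le> real (N_max \<Lambda>) / real (card \<Lambda>)"
    and "real (N_max \<Lambda>) / real (card \<Lambda>) \<le> 1/3 + 4 / (3 * real (card \<Lambda>))"
  using N_max_lower_bound[of \<Lambda>] N_max_upper_bound[of \<Lambda>] assms
  by (simp_all add: field_simps flip: of_nat_mult of_nat_add of_nat_le_iff)

lemma N_max_density_close:
  assumes "\<epsilon> > 0" and "4 / \<epsilon> < real (card \<Lambda>)"
  shows "\<bar>real (N_max \<Lambda>) / real (card \<Lambda>) - 1/3\<bar> < \<epsilon>"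
proof -
  have "0 < 4 / \<epsilon>" using assms(1) by simp
  with assms(2) have "card \<Lambda> > 0" by linarith
  moreover from this have "4 / (3 * real (card \<Lambda>)) < \<epsilon>" using assms by (simp add: field_simps)
  ultimately show ?thesis using N_max_density_bounds[of \<Lambda>] by linarith
qed

theorem lemma2p5:
  shows "(\<forall>(a::int) b. a \<le> b \<longrightarrow>
            (\<forall>N \<le> N_max {a..b}. \<exists>R \<in> root_tilings {a..b}. particle_number R = N) \<and>
            1/3 \<le> real (N_max {a..b}) / real (card {a..b}) \<and>
            real (N_max {a..b}) / real (card {a..b}) \<le> 1/3 + 4 / (3 * real (card {a..b})))
      \<and> (\<forall>\<epsilon>>0. \<exists>L. \<forall>(a::int) b. a \<le> b \<longrightarrow> card {a..b} \<ge> L \<longrightarrow>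
            \<bar>real (N_max {a..b}) / real (card {a..b}) - 1/3\<bar> < \<epsilon>)"
proof (intro conjI allI impI)
  fix a b :: int and N
  assume "N \<le> N_max {a..b}"
  then show "\<exists>R\<in>root_tilings {a..b}. particle_number R = N" by (rule root_tilings_particle_numbers)
next
  fix a b :: int
  assume "a \<le> b"
  then have "card {a..b} > 0" by simp
  then show "1/3 \<le> real (N_max {a..b}) / real (card {a..b})"
    and "real (N_max {a..b}) / real (card {a..b}) \<le> 1/3 + 4 / (3 * real (card {a..b}))"
    by (rule N_max_density_bounds)+
next
  fix \<epsilon> :: real
  assume "\<epsilon> > 0"
  show "\<exists>L. \<forall>a b. a \<le> b \<longrightarrow> L \<le> card {a..b} \<longrightarrow>
      \<bar>real (N_max {a..b}) / real (card {a..b}) - 1/3\<bar> < \<epsilon>"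
  proof (intro exI[of _ "nat \<lceil>4 / \<epsilon>\<rceil> + 1"] allI impI)
    fix a b :: int
    assume "nat \<lceil>4 / \<epsilon>\<rceil> + 1 \<le> card {a..b}"
    then have "4 / \<epsilon> < real (card {a..b})" by linarith
    with \<open>\<epsilon> > 0\<close> show "\<bar>real (N_max {a..b}) / real (card {a..b}) - 1/3\<bar> < \<epsilon>"
      by (rule N_max_density_close)
  qed
qed

end
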